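(* Let $\varphi\colon G\to G$ be an endomorphism of an abelian group $G$, let $t(G)$ be the torsion subgroup of $G$, $\varphi|_{t(G)}\colon t(G)\to t(G)$ the restriction, and $S$ a finite subgroup of $G$. Then: (1) $S$ is a positive generator for $\varphi$ if and only if $\sum_{k\in\mathbb N}\varphi^kS=t(G)$; (2) $\varphi$ is positively $S$-expansive if and only if $\varphi|_{t(G)}$ is positively $S$-expansive. If moreover $\varphi$ is an automorphism, then: (3) $S$ is a generator for $\varphi$ if and only if $\sum_{k\in\mathbb Z}\varphi^kS=t(G)$; (4) $\varphi$ is $S$-expansive if and only if $\varphi|_{t(G)}$ is $S$-expansive.
   Context: $\mathbb N=\{0,1,2,\dots\}$. For an endomorphism $\varphi$ of an abelian group $G$, a finite subgroup $S\leq G$ is a positive generator (and $\varphi$ is called positively $S$-expansive) if for every finite subgroup $F\leq G$ there is $n\in\mathbb N$ with $F\subseteq\sum_{k=0}^n\varphi^kS$. For an automorphism $\varphi$, a finite subgroup $S$ is a generator (and $\varphi$ is $S$-expansive) if for every finite subgroup $F\leq G$ there is $n\in\mathbb N$ with $F\subseteq\sum_{|k|\leq n}\varphi^kS$; for negative $k$, $\varphi^k$ denotes the power of $\varphi^{-1}$. *)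

theory Defs
  imports Main
begin

text \<open>Notions for the restriction of phi to the torsion subgroup are stated
relative to a carrier H (H = UNIV gives the notions for G itself).\<close>

definition subgrp :: "'a::ab_group_add set \<Rightarrow> bool" where
  "subgrp H \<longleftrightarrow> 0 \<in> H \<and> (\<forall>x\<in>H. \<forall>y\<in>H. x + y \<in> H) \<and> (\<forall>x\<in>H. - x \<in> H)"

definition additive_endo :: "('a::ab_group_add \<Rightarrow> 'a) \<Rightarrow> bool" where
  "additive_endo \<phi> \<longleftrightarrow> (\<forall>x y. \<phi> (x + y) = \<phi> x + \<phi> y)"

definition torsion :: "'a::ab_group_add set" where
  "torsion = {x. \<exists>n::nat. n > 0 \<and> (\<Sum>i<n. x) = 0}"

definition fam_sum :: "'i set \<Rightarrow> ('i \<Rightarrow> 'a::ab_group_add set) \<Rightarrow> 'a set" where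
  "fam_sum I A = {\<Sum>k\<in>I. x k | x. \<forall>k\<in>I. x k \<in> A k}"

definition zpow :: "('a \<Rightarrow> 'a) \<Rightarrow> int \<Rightarrow> 'a \<Rightarrow> 'a" where
  "zpow \<phi> k = (if 0 \<le> k then \<phi> ^^ nat k else (inv \<phi>) ^^ nat (- k))"

definition pos_generator :: "'a::ab_group_add set \<Rightarrow> ('a \<Rightarrow> 'a) \<Rightarrow> 'a set \<Rightarrow> bool" where
  "pos_generator H \<phi> S \<longleftrightarrow> finite S \<and> subgrp S \<and> S \<subseteq> H \<and>
     (\<forall>F. finite F \<and> subgrp F \<and> F \<subseteq> H \<longrightarrow>
        (\<exists>n::nat. F \<subseteq> fam_sum {0..n} (\<lambda>k. (\<phi> ^^ k) ` S)))"

definition pos_expansive :: "'a::ab_group_add set \<Rightarrow> ('a \<Rightarrow> 'a) \<Rightarrow> 'a set \<Rightarrow> bool" where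
  "pos_expansive H \<phi> S \<longleftrightarrow> pos_generator H \<phi> S"

definition generator :: "'a::ab_group_add set \<Rightarrow> ('a \<Rightarrow> 'a) \<Rightarrow> 'a set \<Rightarrow> bool" where
  "generator H \<phi> S \<longleftrightarrow> finite S \<and> subgrp S \<and> S \<subseteq> H \<and>
     (\<forall>F. finite F \<and> subgrp F \<and> F \<subseteq> H \<longrightarrow>
        (\<exists>n::nat. F \<subseteq> fam_sum {- int n..int n} (\<lambda>k. zpow \<phi> k ` S)))"

definition expansive :: "'a::ab_group_add set \<Rightarrow> ('a \<Rightarrow> 'a) \<Rightarrow> 'a set \<Rightarrow> bool" where
  "expansive H \<phi> S \<longleftrightarrow> generator H \<phi> S"

definition nat_orbit_sum :: "('a::ab_group_add \<Rightarrow> 'a) \<Rightarrow> 'a set \<Rightarrow> 'a set" where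
  "nat_orbit_sum \<phi> S = (\<Union>n::nat. fam_sum {0..n} (\<lambda>k. (\<phi> ^^ k) ` S))"

definition int_orbit_sum :: "('a::ab_group_add \<Rightarrow> 'a) \<Rightarrow> 'a set \<Rightarrow> 'a set" where
  "int_orbit_sum \<phi> S = (\<Union>n::nat. fam_sum {- int n..int n} (\<lambda>k. zpow \<phi> k ` S))"

end

theory Submission
  imports Defs HOL.Modules
begin

text \<open>A finite subgroup of an abelian group G lies in the torsion subgroup t(G), since by
pigeonhole its elements have finite order; conversely every torsion element generates a finite
cyclic subgroup. Hence G and t(G) have the same finite subgroups, which gives (2) and (4). The
partial sums of the \<phi>^k S over 0 \<le> k \<le> n (resp. |k| \<le> n) form an increasing chain of
subsets of t(G), and a finite set contained in their union is contained in one of them. So every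
finite subgroup lies in some partial sum iff every torsion element lies in the union, which
gives (1) and (3).\<close>

definition nat_multiple :: "nat \<Rightarrow> 'a::ab_group_add \<Rightarrow> 'a" where
  "nat_multiple n x = (\<Sum>i<n. x)"

lemma nat_multiple_0 [simp]: "nat_multiple 0 x = 0"
  by (simp add: nat_multiple_def)

lemma nat_multiple_Suc [simp]: "nat_multiple (Suc n) x = nat_multiple n x + x"
  by (simp add: nat_multiple_def)

lemma nat_multiple_zero [simp]: "nat_multiple n (0::'a::ab_group_add) = 0"
  by (simp add: nat_multiple_def)

lemma nat_multiple_add: "nat_multiple (m + n) x = nat_multiple m x + nat_multiple n x"
  by (induction n) (simp_all add: add.assoc)

lemma nat_multiple_mult: "nat_multiple (m * n) x = nat_multiple m (nat_multiple n x)"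
  by (induction m) (simp_all add: nat_multiple_add add.commute)

lemma nat_multiple_add_right:
  "nat_multiple n (x + y) = nat_multiple n x + nat_multiple n y"
  by (induction n) (simp_all add: algebra_simps)

lemma nat_multiple_mod:
  assumes "nat_multiple n x = 0"
  shows "nat_multiple k x = nat_multiple (k mod n) x"
  using nat_multiple_add[of "k div n * n" "k mod n" x] by (simp add: nat_multiple_mult assms)

lemma torsion_iff: "x \<in> torsion \<longleftrightarrow> (\<exists>n>0. nat_multiple n x = 0)"
  by (auto simp: torsion_def nat_multiple_def)

lemma torsion_add:
  assumes "x \<in> torsion" "y \<in> torsion"
  shows "x + y \<in> torsion"
proof -
  obtain m where m: "m > 0" "nat_multiple m x = 0" using assms(1) torsion_iff by blast
  obtain n where n: "n > 0" "nat_multiple n y = 0" using assms(2) torsion_iff by blast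
  have "nat_multiple (n * m) (x + y) = 0"
    using nat_multiple_mult[of n m x] nat_multiple_mult[of m n y] m n
    by (simp add: nat_multiple_add_right mult.commute)
  with m n show ?thesis
    unfolding torsion_iff by (intro exI[of _ "n * m"]) simp
qed

lemma subgrp_nat_multiple: "subgrp F \<Longrightarrow> x \<in> F \<Longrightarrow> nat_multiple n x \<in> F"
  by (induction n) (auto simp: subgrp_def)

lemma finite_subgrp_subset_torsion:
  assumes "finite F" "subgrp F"
  shows "F \<subseteq> torsion"
proof
  fix x assume "x \<in> F"
  then have "range (\<lambda>k. nat_multiple k x) \<subseteq> F"
    using subgrp_nat_multiple assms(2) by blast
  then have "\<not> inj (\<lambda>k. nat_multiple k x)"
    using assms(1) finite_imageD infinite_UNIV_nat rev_finite_subset by blast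
  then obtain i j where "i < j" and ij: "nat_multiple i x = nat_multiple j x"
    unfolding inj_def by (metis linorder_neq_iff)
  then have "nat_multiple (j - i) x = 0"
    using nat_multiple_add[of i "j - i" x] by simp
  with \<open>i < j\<close> show "x \<in> torsion"
    unfolding torsion_iff by (intro exI[of _ "j - i"]) simp
qed

lemma torsion_in_finite_subgrp:
  assumes "x \<in> torsion"
  obtains F where "finite F" "subgrp F" "x \<in> F"
proof
  obtain n where n: "n > 0" "nat_multiple n x = 0" using assms torsion_iff by blast
  let ?C = "range (\<lambda>k. nat_multiple k x)"
  have "?C \<subseteq> (\<lambda>k. nat_multiple k x) ` {..<n}"
    using nat_multiple_mod[OF n(2)] n(1)
    by (metis image_eqI image_subsetI lessThan_iff mod_less_divisor)
  then show "finite ?C"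
    using finite_surj by blast
  have "- nat_multiple k x = nat_multiple (k * (n - 1)) x" for k
  proof -
    have "nat_multiple k x + nat_multiple (k * (n - 1)) x = nat_multiple (k * n) x"
      using n(1) by (simp add: nat_multiple_add[symmetric] algebra_simps)
    also have "\<dots> = 0"
      by (simp add: nat_multiple_mult n(2))
    finally show ?thesis
      by (simp add: neg_eq_iff_add_eq_0)
  qed
  then show "subgrp ?C"
    unfolding subgrp_def by (auto simp: nat_multiple_add[symmetric] image_iff
      intro: exI[of _ 0])
  show "x \<in> ?C"
    by (rule image_eqI[of _ _ 1]) simp_all
qed

lemma finite_subset_Union_mono:
  fixes Q :: "nat \<Rightarrow> 'a set"
  assumes "mono Q" "finite F" "F \<subseteq> (\<Union>n. Q n)"
  shows "\<exists>n. F \<subseteq> Q n"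
  using assms(2,3)
proof (induction F rule: finite_induct)
  case empty
  then show ?case by simp
next
  case (insert x F)
  then obtain m n where "x \<in> Q m" "F \<subseteq> Q n" by blast
  then have "insert x F \<subseteq> Q (max m n)"
    using monoD[OF assms(1), of m "max m n"] monoD[OF assms(1), of n "max m n"] by auto
  then show ?case by blast
qed

lemma finite_subgrps_covered_iff_Union_eq_torsion:
  fixes Q :: "nat \<Rightarrow> 'a::ab_group_add set"
  assumes "mono Q" "\<And>n. Q n \<subseteq> torsion"
  shows "(\<forall>F. finite F \<and> subgrp F \<longrightarrow> (\<exists>n. F \<subseteq> Q n)) \<longleftrightarrow> (\<Union>n. Q n) = torsion"
proof
  assume covered: "\<forall>F. finite F \<and> subgrp F \<longrightarrow> (\<exists>n. F \<subseteq> Q n)"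
  have "x \<in> (\<Union>n. Q n)" if "x \<in> torsion" for x
  proof -
    obtain F where "finite F" "subgrp F" "x \<in> F"
      using torsion_in_finite_subgrp \<open>x \<in> torsion\<close> by blast
    then show ?thesis using covered by blast
  qed
  with assms(2) show "(\<Union>n. Q n) = torsion" by blast
next
  assume "(\<Union>n. Q n) = torsion"
  then show "\<forall>F. finite F \<and> subgrp F \<longrightarrow> (\<exists>n. F \<subseteq> Q n)"
    using finite_subset_Union_mono[OF assms(1)] finite_subgrp_subset_torsion by metis
qed

lemma fam_sum_mono_index:
  assumes "finite J" "I \<subseteq> J" "\<And>k. k \<in> J - I \<Longrightarrow> 0 \<in> A k"
  shows "fam_sum I A \<subseteq> fam_sum J A"
proof
  fix z assume "z \<in> fam_sum I A"
  then obtain x where x: "z = (\<Sum>k\<in>I. x k)" "\<forall>k\<in>I. x k \<in> A k"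
    unfolding fam_sum_def by blast
  define y where "y k = (if k \<in> I then x k else 0)" for k
  have "(\<Sum>k\<in>J. y k) = (\<Sum>k\<in>I. y k)"
    using assms(1,2) by (intro sum.mono_neutral_right) (auto simp: y_def)
  then have "z = (\<Sum>k\<in>J. y k)"
    using x(1) by (simp add: y_def)
  moreover have "\<forall>k\<in>J. y k \<in> A k"
    using x(2) assms(3) by (auto simp: y_def)
  ultimately show "z \<in> fam_sum J A"
    unfolding fam_sum_def by blast
qed

lemma fam_sum_subset_torsion:
  assumes "finite I" "\<And>k. k \<in> I \<Longrightarrow> A k \<subseteq> torsion"
  shows "fam_sum I A \<subseteq> torsion"
proof -
  have zero: "0 \<in> torsion"
    unfolding torsion_iff by (intro exI[of _ 1]) simp
  have "sum x I \<in> torsion" if "\<forall>k\<in>I. x k \<in> A k" for x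
    using assms(1) that assms(2) zero
    by (induction I rule: finite_induct) (auto intro!: torsion_add)
  then show ?thesis
    unfolding fam_sum_def by blast
qed

lemma finite_subgrps_covered_iff_Union_fam_sum_eq_torsion:
  fixes I :: "nat \<Rightarrow> 'i set" and A :: "'i \<Rightarrow> 'a::ab_group_add set"
  assumes "mono I" "\<And>n. finite (I n)" "\<And>k. finite (A k)" "\<And>k. subgrp (A k)"
  shows "(\<forall>F. finite F \<and> subgrp F \<longrightarrow> (\<exists>n. F \<subseteq> fam_sum (I n) A))
     \<longleftrightarrow> (\<Union>n. fam_sum (I n) A) = torsion"
proof (rule finite_subgrps_covered_iff_Union_eq_torsion)
  show "mono (\<lambda>n. fam_sum (I n) A)"
    using assms(4) by (intro monoI fam_sum_mono_index assms(2) monoD[OF assms(1)])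
      (simp_all add: subgrp_def)
  show "fam_sum (I n) A \<subseteq> torsion" for n
    using assms(2-4) by (simp add: fam_sum_subset_torsion finite_subgrp_subset_torsion)
qed

lemma additive_endo_iff_additive: "additive_endo f \<longleftrightarrow> additive f"
  by (simp add: additive_endo_def additive_def)

lemma additive_funpow: "additive f \<Longrightarrow> additive (f ^^ n :: 'a::ab_group_add \<Rightarrow> 'a)"
  by (induction n) (simp_all add: additive_def)

lemma additive_inv:
  assumes "additive f" "bij f"
  shows "additive (inv f)"
proof
  fix x y
  have "f (inv f x + inv f y) = f (inv f (x + y))"
    using assms by (simp add: additive.add bij_is_surj surj_f_inv_f)
  then show "inv f (x + y) = inv f x + inv f y"
    using assms(2) bij_is_inj injD by metis
qed

lemma additive_zpow: "additive f \<Longrightarrow> bij f \<Longrightarrow> additive (zpow f k)"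
  by (simp add: zpow_def additive_funpow additive_inv)

lemma subgrp_image: "additive f \<Longrightarrow> subgrp S \<Longrightarrow> subgrp (f ` S)"
  unfolding subgrp_def
  by (auto simp: image_iff additive.add[symmetric] additive.minus[symmetric])
    (metis additive.zero)

lemma pos_generator_UNIV_iff_nat_orbit_sum:
  assumes "additive \<phi>" "finite S" "subgrp S"
  shows "pos_generator UNIV \<phi> S \<longleftrightarrow> nat_orbit_sum \<phi> S = torsion"
proof -
  have "mono (\<lambda>n::nat. {0..n})"
    by (auto intro: monoI)
  moreover have "finite ((\<phi> ^^ k) ` S)" "subgrp ((\<phi> ^^ k) ` S)" for k
    using assms by (simp_all add: subgrp_image additive_funpow)
  ultimately show ?thesis
    using finite_subgrps_covered_iff_Union_fam_sum_eq_torsion[of _ "\<lambda>k. (\<phi> ^^ k) ` S"] assms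
    by (simp add: pos_generator_def nat_orbit_sum_def)
qed

lemma generator_UNIV_iff_int_orbit_sum:
  assumes "additive \<phi>" "bij \<phi>" "finite S" "subgrp S"
  shows "generator UNIV \<phi> S \<longleftrightarrow> int_orbit_sum \<phi> S = torsion"
proof -
  have "mono (\<lambda>n::nat. {- int n..int n})"
    by (auto intro: monoI)
  moreover have "finite (zpow \<phi> k ` S)" "subgrp (zpow \<phi> k ` S)" for k
    using assms by (simp_all add: subgrp_image additive_zpow)
  ultimately show ?thesis
    using finite_subgrps_covered_iff_Union_fam_sum_eq_torsion[of _ "\<lambda>k. zpow \<phi> k ` S"] assms
    by (simp add: generator_def int_orbit_sum_def)
qed

lemma pos_generator_torsion_iff: "pos_generator torsion \<phi> S \<longleftrightarrow> pos_generator UNIV \<phi> S"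
  unfolding pos_generator_def by (simp add: finite_subgrp_subset_torsion cong: conj_cong)

lemma generator_torsion_iff: "generator torsion \<phi> S \<longleftrightarrow> generator UNIV \<phi> S"
  unfolding generator_def by (simp add: finite_subgrp_subset_torsion cong: conj_cong)

theorem proposition2p2:
  fixes \<phi> :: "'a::ab_group_add \<Rightarrow> 'a" and S :: "'a set"
  assumes endo: "additive_endo \<phi>"
    and finS: "finite S" and subS: "subgrp S"
  shows "(pos_generator UNIV \<phi> S \<longleftrightarrow> nat_orbit_sum \<phi> S = torsion)
       \<and> (pos_expansive UNIV \<phi> S \<longleftrightarrow> pos_expansive torsion \<phi> S)
       \<and> (bij \<phi> \<longrightarrow>
            (generator UNIV \<phi> S \<longleftrightarrow> int_orbit_sum \<phi> S = torsion)
          \<and> (expansive UNIV \<phi> S \<longleftrightarrow> expansive torsion \<phi> S))"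
proof -
  have additive: "additive \<phi>"
    using endo by (simp add: additive_endo_iff_additive)
  show ?thesis
    unfolding pos_expansive_def expansive_def pos_generator_torsion_iff generator_torsion_iff
    using pos_generator_UNIV_iff_nat_orbit_sum[OF additive finS subS]
      generator_UNIV_iff_int_orbit_sum[OF additive _ finS subS]
    by blast
qed

end
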